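(* Let $X \subseteq 2^\omega$ be nice. Then for every Borel function $x \mapsto Y^x$ from $2^\omega$ to $[\omega]^\omega$ there exists a set $Y = \{u_n : n \in \omega\} \subseteq \omega$ such that (1) $u_{n+1} \geq u_n + 2$ for all $n$, and (2) for every $x \in X$, the set $Y \cap Y^x$ is infinite.
   Context: $[\omega]^\omega$ denotes the set of infinite subsets of $\omega$, viewed as a subspace of $2^\omega$. A set $X \subseteq 2^\omega$ is nice if for every Borel function $x \mapsto f^x$ from $2^\omega$ to $\omega^\omega$ there exists $g \in \omega^\omega$ such that for every $x \in X$ there are infinitely many $n$ with $f^x(n) = g(n)$. *)

theory Defs
  imports "HOL-Analysis.Analysis"
begin

text \<open>Cantor space 2^omega is the type nat \<Rightarrow> bool and Baire space omega^omega is
nat \<Rightarrow> nat, both with the product topology (Function_Topology) and their Borel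
sigma-algebras.\<close>

definition nice :: "(nat \<Rightarrow> bool) set \<Rightarrow> bool" where
  "nice X \<longleftrightarrow>
     (\<forall>f :: (nat \<Rightarrow> bool) \<Rightarrow> (nat \<Rightarrow> nat). f \<in> borel \<rightarrow>\<^sub>M borel \<longrightarrow>
        (\<exists>g :: nat \<Rightarrow> nat. \<forall>x\<in>X. infinite {n. f x n = g n}))"

end

theory Submission
  imports Defs "HOL-Library.Nat_Bijection"
begin

(* Code the infinite set Y^x at stage n by the finite set of its elements below the least k such
   that [n, k) contains 3n + 1 of them; read as a natural number, this is a Borel map x \<mapsto> f^x
   into Baire space. Niceness gives g guessing f^x(n) infinitely often for each x \<in> X. Read each
   g(n) as a finite set and choose Y greedily: at stage n add the least a \<ge> n in g(n) at distance
   at least 2 from the at most n points chosen so far. These points exclude at most 3n candidates,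
   so whenever g(n) = f^x(n) a point a \<ge> n of Y^x is added. Thus Y meets each Y^x unboundedly,
   and its increasing enumeration has gaps at least 2. *)

lemma measurable_coordinate_count_space [measurable]:
  "(\<lambda>f::'i \<Rightarrow> 'a::{countable,t2_space}. f i) \<in> borel \<rightarrow>\<^sub>M count_space UNIV"
proof -
  have "(\<lambda>f::'i \<Rightarrow> 'a. f i) \<in> borel \<rightarrow>\<^sub>M borel"
    by (rule measurable_product_coordinates)
  moreover have "borel \<rightarrow>\<^sub>M (borel :: 'a measure) = (borel :: ('i \<Rightarrow> 'a) measure) \<rightarrow>\<^sub>M count_space UNIV"
    by (rule measurable_cong_sets[OF refl sets_borel_eq_count_space])
  ultimately show ?thesis by simp
qed

lemma measurable_coordinatewise_count_space_then_product:
  fixes f :: "'a \<Rightarrow> ('b::countable) \<Rightarrow> ('c::{countable,t2_space,second_countable_topology})"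
  assumes "\<And>i. (\<lambda>x. f x i) \<in> M \<rightarrow>\<^sub>M count_space UNIV"
  shows "f \<in> borel_measurable M"
  using assms
  by (intro measurable_coordinatewise_then_product)
    (simp add: measurable_cong_sets[OF refl sets_borel_eq_count_space])

definition prefix_code :: "nat \<Rightarrow> (nat \<Rightarrow> bool) \<Rightarrow> nat" where
  "prefix_code k Y = (\<Sum>i<k. if Y i then 2 ^ i else 0)"

lemma prefix_code_eq_set_encode: "prefix_code k Y = set_encode {i. i < k \<and> Y i}"
proof -
  have "{i. i < k \<and> Y i} = {i\<in>{..<k}. Y i}" by auto
  then show ?thesis
    unfolding prefix_code_def set_encode_def
    by (simp only: sum.inter_filter[OF finite_lessThan])
qed

definition sample_bound :: "(nat \<Rightarrow> bool) \<Rightarrow> nat \<Rightarrow> nat" where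
  "sample_bound Y n = (LEAST k. 3 * n < card {i. n \<le> i \<and> i < k \<and> Y i})"

definition sample_code :: "(nat \<Rightarrow> bool) \<Rightarrow> nat \<Rightarrow> nat" where
  "sample_code Y n = prefix_code (sample_bound Y n) Y"

lemma measurable_sample_code: "(\<lambda>Y. sample_code Y n) \<in> borel \<rightarrow>\<^sub>M count_space UNIV"
proof -
  have "(\<lambda>Y. sample_bound Y n) \<in> borel \<rightarrow>\<^sub>M count_space UNIV"
    unfolding sample_bound_def by measurable
  moreover have "prefix_code k \<in> borel \<rightarrow>\<^sub>M count_space UNIV" for k
    unfolding prefix_code_def by measurable
  ultimately show ?thesis
    unfolding sample_code_def by (rule measurable_compose_countable[where f = prefix_code, rotated])
qed

lemma set_decode_sample_code: "set_decode (sample_code Y n) = {i. i < sample_bound Y n \<and> Y i}"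
  by (simp add: sample_code_def prefix_code_eq_set_encode)

lemma card_sample_code_ge:
  assumes "infinite {i. Y i}"
  shows "3 * n < card {a \<in> set_decode (sample_code Y n). n \<le> a}"
proof -
  have "{i. n \<le> i \<and> Y i} = {i. Y i} - {..<n}" by auto
  then have "infinite {i. n \<le> i \<and> Y i}"
    using assms by (simp add: Diff_infinite_finite)
  then obtain B where B: "finite B" "card B = 3 * n + 1" "B \<subseteq> {i. n \<le> i \<and> Y i}"
    using infinite_arbitrarily_large by blast
  then have "B \<subseteq> {i. n \<le> i \<and> i < Suc (Max B) \<and> Y i}"
    by (auto simp: less_Suc_eq_le)
  then have "3 * n < card {i. n \<le> i \<and> i < Suc (Max B) \<and> Y i}"
    using B(2) card_mono[of "{i. n \<le> i \<and> i < Suc (Max B) \<and> Y i}" B] by simp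
  then have "3 * n < card {i. n \<le> i \<and> i < sample_bound Y n \<and> Y i}"
    unfolding sample_bound_def by (rule LeastI)
  moreover have "{a \<in> set_decode (sample_code Y n). n \<le> a} = {i. n \<le> i \<and> i < sample_bound Y n \<and> Y i}"
    by (auto simp: set_decode_sample_code)
  ultimately show ?thesis by simp
qed

definition apart :: "nat set \<Rightarrow> nat \<Rightarrow> bool" where
  "apart F a \<longleftrightarrow> (\<forall>b\<in>F. a + 1 < b \<or> b + 1 < a)"

lemma exists_apart:
  assumes "finite F" "3 * card F < card D"
  shows "\<exists>a\<in>D. apart F a"
proof (rule ccontr)
  assume "\<not> (\<exists>a\<in>D. apart F a)"
  have "D \<subseteq> F \<union> Suc ` F \<union> (\<lambda>b. b - 1) ` F"
  proof
    fix a
    assume "a \<in> D"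
    then obtain b where "b \<in> F" "\<not> (a + 1 < b \<or> b + 1 < a)"
      using \<open>\<not> (\<exists>a\<in>D. apart F a)\<close> unfolding apart_def by blast
    then have "b \<in> F" "a = b \<or> a = Suc b \<or> a = b - 1" by auto
    then show "a \<in> F \<union> Suc ` F \<union> (\<lambda>b. b - 1) ` F" by blast
  qed
  then have "card D \<le> card (F \<union> Suc ` F \<union> (\<lambda>b. b - 1) ` F)"
    using assms(1) by (intro card_mono) auto
  also have "\<dots> \<le> card F + card (Suc ` F) + card ((\<lambda>b. b - 1) ` F)"
    by (meson card_Un_le add_right_mono order_trans)
  also have "\<dots> \<le> 3 * card F"
    using card_image_le[OF assms(1), of Suc] card_image_le[OF assms(1), of "\<lambda>b. b - 1"]
    by linarith
  finally show False using assms(2) by simp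
qed

fun greedy_sparse :: "(nat \<Rightarrow> nat set) \<Rightarrow> nat \<Rightarrow> nat set" where
  "greedy_sparse D 0 = {}"
| "greedy_sparse D (Suc n) =
    (let C = {a \<in> D n. n \<le> a \<and> apart (greedy_sparse D n) a}
     in if C = {} then greedy_sparse D n else insert (Least (\<lambda>a. a \<in> C)) (greedy_sparse D n))"

lemma finite_greedy_sparse: "finite (greedy_sparse D n)"
  by (induction n) (simp_all add: Let_def)

lemma card_greedy_sparse_le: "card (greedy_sparse D n) \<le> n"
  by (induction n) (simp_all add: Let_def card_insert_if finite_greedy_sparse)

lemma greedy_sparse_mono: "m \<le> n \<Longrightarrow> greedy_sparse D m \<subseteq> greedy_sparse D n"
  by (rule lift_Suc_mono_le[of "greedy_sparse D"]) (auto simp: Let_def)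

lemma greedy_sparse_no_Suc: "a \<in> greedy_sparse D n \<Longrightarrow> Suc a \<notin> greedy_sparse D n"
proof (induction n arbitrary: a)
  case 0
  then show ?case by simp
next
  case (Suc n)
  define C where "C = {a \<in> D n. n \<le> a \<and> apart (greedy_sparse D n) a}"
  show ?case
  proof (cases "C = {}")
    case True
    then show ?thesis using Suc by (simp add: C_def[symmetric] Let_def)
  next
    case False
    define c where "c = Least (\<lambda>a. a \<in> C)"
    have "c \<in> C" unfolding c_def using False by (auto intro: LeastI)
    then have "apart (greedy_sparse D n) c" unfolding C_def by blast
    moreover have "greedy_sparse D (Suc n) = insert c (greedy_sparse D n)"
      using False by (simp add: C_def[symmetric] c_def Let_def)
    ultimately show ?thesis
      using Suc by (auto simp: apart_def)
  qed
qed

lemma greedy_sparse_Suc_hits: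
  assumes "3 * n < card {a \<in> D n. n \<le> a}"
  shows "\<exists>c \<in> greedy_sparse D (Suc n). c \<in> D n \<and> n \<le> c"
proof -
  define C where "C = {a \<in> D n. n \<le> a \<and> apart (greedy_sparse D n) a}"
  have "3 * card (greedy_sparse D n) < card {a \<in> D n. n \<le> a}"
    using assms card_greedy_sparse_le[of D n] by linarith
  then obtain a where "a \<in> C"
    using exists_apart[OF finite_greedy_sparse] unfolding C_def by fastforce
  then have "Least (\<lambda>a. a \<in> C) \<in> C" by (rule LeastI)
  moreover have "Least (\<lambda>a. a \<in> C) \<in> greedy_sparse D (Suc n)"
    using \<open>a \<in> C\<close> by (auto simp: C_def[symmetric] Let_def)
  ultimately show ?thesis unfolding C_def by blast
qed

lemma UN_greedy_sparse_no_Suc: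
  assumes "a \<in> (\<Union>n. greedy_sparse D n)"
  shows "Suc a \<notin> (\<Union>n. greedy_sparse D n)"
proof
  assume "Suc a \<in> (\<Union>n. greedy_sparse D n)"
  with assms obtain i j where "a \<in> greedy_sparse D i" "Suc a \<in> greedy_sparse D j" by blast
  then have "a \<in> greedy_sparse D (max i j)" "Suc a \<in> greedy_sparse D (max i j)"
    using greedy_sparse_mono[of i "max i j" D] greedy_sparse_mono[of j "max i j" D] by auto
  then show False using greedy_sparse_no_Suc by blast
qed

lemma infinite_UN_greedy_sparse_inter:
  assumes "infinite {n. D n \<subseteq> A \<and> 3 * n < card {a \<in> D n. n \<le> a}}"
  shows "infinite ((\<Union>n. greedy_sparse D n) \<inter> A)"
  unfolding infinite_nat_iff_unbounded_le
proof
  fix m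
  obtain n where "m \<le> n" "D n \<subseteq> A" "3 * n < card {a \<in> D n. n \<le> a}"
    using assms unfolding infinite_nat_iff_unbounded_le by blast
  then obtain c where "c \<in> greedy_sparse D (Suc n)" "c \<in> A" "m \<le> c"
    using greedy_sparse_Suc_hits by fastforce
  then show "\<exists>c\<ge>m. c \<in> (\<Union>n. greedy_sparse D n) \<inter> A" by blast
qed

lemma infinite_UN_greedy_sparse_inter_guessed:
  assumes "infinite {i. Y i}" "infinite {n. sample_code Y n = g n}"
  shows "infinite ((\<Union>n. greedy_sparse (set_decode \<circ> g) n) \<inter> {i. Y i})"
proof (rule infinite_UN_greedy_sparse_inter)
  let ?D = "set_decode \<circ> g"
  have "{n. sample_code Y n = g n} \<subseteq> {n. ?D n \<subseteq> {i. Y i} \<and> 3 * n < card {a \<in> ?D n. n \<le> a}}"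
  proof
    fix n
    assume "n \<in> {n. sample_code Y n = g n}"
    then have "?D n = set_decode (sample_code Y n)" by simp
    then show "n \<in> {n. ?D n \<subseteq> {i. Y i} \<and> 3 * n < card {a \<in> ?D n. n \<le> a}}"
      using card_sample_code_ge[OF assms(1), of n] by (auto simp: set_decode_sample_code)
  qed
  then show "infinite {n. ?D n \<subseteq> {i. Y i} \<and> 3 * n < card {a \<in> ?D n. n \<le> a}}"
    using assms(2) infinite_super by blast
qed

lemma enumerate_gap_ge_2:
  assumes "infinite S" "\<And>a. a \<in> S \<Longrightarrow> Suc a \<notin> S"
  shows "enumerate S n + 2 \<le> enumerate S (Suc n)"
proof -
  have "enumerate S n < enumerate S (Suc n)"
    using assms(1) by (rule enumerate_step)
  moreover have "enumerate S (Suc n) \<noteq> Suc (enumerate S n)"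
    using assms enumerate_in_set by metis
  ultimately show ?thesis by simp
qed

theorem lemma2p7:
  fixes X :: "(nat \<Rightarrow> bool) set"
    and Yx :: "(nat \<Rightarrow> bool) \<Rightarrow> (nat \<Rightarrow> bool)"
  assumes "nice X"
    and "Yx \<in> borel \<rightarrow>\<^sub>M borel"
    and "\<forall>x. infinite {n. Yx x n}"
  shows "\<exists>u :: nat \<Rightarrow> nat. (\<forall>n. u (Suc n) \<ge> u n + 2) \<and>
           (\<forall>x\<in>X. infinite (range u \<inter> {n. Yx x n}))"
proof (cases "X = {}")
  case True
  then show ?thesis by (intro exI[of _ "\<lambda>n. 2 * n"]) simp
next
  case False
  have "(\<lambda>x. sample_code (Yx x)) \<in> borel \<rightarrow>\<^sub>M borel"
    using measurable_compose[OF assms(2) measurable_sample_code]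
    by (rule measurable_coordinatewise_count_space_then_product)
  then obtain g where g: "\<forall>x\<in>X. infinite {n. sample_code (Yx x) n = g n}"
    using assms(1) unfolding nice_def by blast
  define S where "S = (\<Union>n. greedy_sparse (set_decode \<circ> g) n)"
  have hits: "infinite (S \<inter> {i. Yx x i})" if "x \<in> X" for x
    unfolding S_def using assms(3) g that by (simp add: infinite_UN_greedy_sparse_inter_guessed)
  have "infinite S" using False hits finite_Int by blast
  moreover have "Suc a \<notin> S" if "a \<in> S" for a
    using that unfolding S_def by (rule UN_greedy_sparse_no_Suc)
  ultimately have "enumerate S n + 2 \<le> enumerate S (Suc n)" for n
    by (rule enumerate_gap_ge_2)
  then show ?thesis
    using hits range_enumerate[OF \<open>infinite S\<close>] by (intro exI[of _ "enumerate S"]) auto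
qed

end
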